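(* Let $\delta\in(0,1)$ and $s>1$. Consider any algorithm following the per-arm adaptive phase scheme described in the context, with an arbitrary sampling rule, and stopping according to the non-private GLR stopping rule with thresholds $c_k$ defined in the context. Then for every bandit instance with $1$-sub-Gaussian arm distributions and a unique best arm $a^\star$, $\mathbb{P}(\tau^{\mathrm{NP}}_\delta<\infty,\ \hat a\ne a^\star)\le\delta$.
   Context: $K$ arms with 1-sub-Gaussian distributions, means $\mu_a$, unique $a^\star=\arg\max_a\mu_a$. At round $n$ the algorithm pulls $I_n$ (any rule depending on the past and internal randomness) and observes $X_n\sim\nu_{I_n}$; $N_{n,a}=\sum_{t<n}\mathbf{1}\{I_t=a\}$. Each arm is pulled once in rounds $1..K$; arm $a$ has phase index $k_a$ starting at 1 with $T_1(a)=K+1$, $\tilde N_{1,a}=1$ and $\hat\mu_{1,a}$ its initial reward. At the start of each round $n>K$, for every $a$ with $N_{n,a}\ge2N_{T_{k_a}(a),a}$: $k_a\leftarrow k_a+1$, $T_{k_a}(a)=n$, $\tilde N_{k_a,a}=N_{T_{k_a}(a),a}-N_{T_{k_a-1}(a),a}$, $\hat\mu_{k_a,a}=\tilde N_{k_a,a}^{-1}\sum_{s=T_{k_a-1}(a)}^{T_{k_a}(a)-1}X_s\mathbf{1}\{I_s=a\}$. $k_{n,a}$ is the phase of $a$ at round $n$. Non-private GLR stopping: with $\hat a_n=\arg\max_a\hat\mu_{k_{n,a},a}$, $\tau^{\mathrm{NP}}_\delta=\inf\{n:\forall b\ne\hat a_n,\ \frac{(\hat\mu_{k_{n,\hat a_n},\hat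 a_n}-\hat\mu_{k_{n,b},b})^2}{1/\tilde N_{k_{n,\hat a_n},\hat a_n}+1/\tilde N_{k_{n,b},b}}\ge2c_{k_{n,\hat a_n}k_{n,b}}(\tilde N_{k_{n,\hat a_n},\hat a_n},\tilde N_{k_{n,b},b},\delta)\}$, recommending $\hat a=\hat a_{\tau}$, where $c_{k_1k_2}$ denotes $c_k$ with $k=k_1k_2$. Thresholds: $\zeta$ Riemann zeta, $g_G(\lambda)=2\lambda-2\lambda\log(4\lambda)+\log\zeta(2\lambda)-\frac12\log(1-\lambda)$, $\mathcal{C}_G(x)=\min_{\lambda\in(1/2,1]}\frac{g_G(\lambda)+x}{\lambda}$, and $c_k(n,m,\delta)=2\mathcal{C}_G\big(\frac12\log\frac{(K-1)\zeta(s)^2k^s}{\delta}\big)+2\log(4+\log n)+2\log(4+\log m)$. *)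

theory Defs
  imports "HOL-Probability.Probability"
begin

definition subgaussian1 :: "real measure \<Rightarrow> bool" where
  "subgaussian1 N \<longleftrightarrow> integrable N (\<lambda>x. x) \<and>
     (\<forall>l::real. integrable N (\<lambda>x. exp (l * (x - (\<integral>y. y \<partial>N)))) \<and>
        (\<integral>x. exp (l * (x - (\<integral>y. y \<partial>N))) \<partial>N) \<le> exp (l\<^sup>2 / 2))"

definition zeta_r :: "real \<Rightarrow> real" where
  "zeta_r s = (\<Sum>n. 1 / (real (Suc n)) powr s)"

definition g_G :: "real \<Rightarrow> real" where
  "g_G l = 2 * l - 2 * l * ln (4 * l) + ln (zeta_r (2 * l)) - 1/2 * ln (1 - l)"

text \<open>The minimum over (1/2,1] in the paper: the objective is +infinity at lambda = 1
  (since -1/2 log 0 = +infinity), so the min is over the open interval (1/2,1), where it is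
  attained; we write it as an infimum over (1/2,1).\<close>
definition C_G :: "real \<Rightarrow> real" where
  "C_G x = Inf ((\<lambda>l. (g_G l + x) / l) ` {1/2<..<1})"

definition c_thr :: "nat \<Rightarrow> real \<Rightarrow> nat \<Rightarrow> nat \<Rightarrow> nat \<Rightarrow> real \<Rightarrow> real" where
  "c_thr K s k n m \<delta> =
     2 * C_G (1/2 * ln ((real K - 1) * (zeta_r s)\<^sup>2 * (real k) powr s / \<delta>))
     + 2 * ln (4 + ln (real n)) + 2 * ln (4 + ln (real m))"

text \<open>Trajectory: i t is the arm pulled at round t (t >= 1), x t the observed reward.
  Arms are 0, ..., K-1.\<close>

definition cnt :: "(nat \<Rightarrow> nat) \<Rightarrow> nat \<Rightarrow> nat \<Rightarrow> nat" where
  "cnt i n a = card {t \<in> {1..<n}. i t = a}"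

text \<open>phase_T K i a k = Some T_k(a) if phase k of arm a is ever started, None otherwise.
  T_1(a) = K+1; T_{k+1}(a) is the first round n > T_k(a) with N_{n,a} >= 2 N_{T_k(a),a}.\<close>
primrec phase_T :: "nat \<Rightarrow> (nat \<Rightarrow> nat) \<Rightarrow> nat \<Rightarrow> nat \<Rightarrow> nat option" where
  "phase_T K i a 0 = None"
| "phase_T K i a (Suc k) =
     (if k = 0 then Some (K + 1)
      else (case phase_T K i a k of
              None \<Rightarrow> None
            | Some t \<Rightarrow>
                (if \<exists>n. t < n \<and> 2 * cnt i t a \<le> cnt i n a
                 then Some (LEAST n. t < n \<and> 2 * cnt i t a \<le> cnt i n a)
                 else None)))"

text \<open>k_{n,a}: phase of arm a at round n (for n >= K+1).\<close>
definition phase_at :: "nat \<Rightarrow> (nat \<Rightarrow> nat) \<Rightarrow> nat \<Rightarrow> nat \<Rightarrow> nat" where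
  "phase_at K i n a = (GREATEST k. \<exists>t. phase_T K i a k = Some t \<and> t \<le> n)"

definition Ntil :: "nat \<Rightarrow> (nat \<Rightarrow> nat) \<Rightarrow> nat \<Rightarrow> nat \<Rightarrow> nat" where
  "Ntil K i k a = (if k = 1 then 1
     else cnt i (the (phase_T K i a k)) a - cnt i (the (phase_T K i a (k - 1))) a)"

definition muhat :: "nat \<Rightarrow> (nat \<Rightarrow> nat) \<Rightarrow> (nat \<Rightarrow> real) \<Rightarrow> nat \<Rightarrow> nat \<Rightarrow> real" where
  "muhat K i x k a = (if k = 1 then x (THE t. t \<in> {1..K} \<and> i t = a)
     else (\<Sum>t \<in> {the (phase_T K i a (k - 1))..<the (phase_T K i a k)}.
              (if i t = a then x t else 0)) / real (Ntil K i k a))"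

definition cur_mu :: "nat \<Rightarrow> (nat \<Rightarrow> nat) \<Rightarrow> (nat \<Rightarrow> real) \<Rightarrow> nat \<Rightarrow> nat \<Rightarrow> real" where
  "cur_mu K i x n a = muhat K i x (phase_at K i n a) a"

definition cur_N :: "nat \<Rightarrow> (nat \<Rightarrow> nat) \<Rightarrow> nat \<Rightarrow> nat \<Rightarrow> nat" where
  "cur_N K i n a = Ntil K i (phase_at K i n a) a"

definition ahat :: "nat \<Rightarrow> (nat \<Rightarrow> nat) \<Rightarrow> (nat \<Rightarrow> real) \<Rightarrow> nat \<Rightarrow> nat" where
  "ahat K i x n = (LEAST a. a < K \<and> (\<forall>b<K. cur_mu K i x n b \<le> cur_mu K i x n a))"

definition glr_stop :: "nat \<Rightarrow> real \<Rightarrow> real \<Rightarrow> (nat \<Rightarrow> nat) \<Rightarrow> (nat \<Rightarrow> real) \<Rightarrow> nat \<Rightarrow> bool" where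
  "glr_stop K s \<delta> i x n \<longleftrightarrow> K + 1 \<le> n \<and>
     (let a = ahat K i x n in
      \<forall>b<K. b \<noteq> a \<longrightarrow>
        (cur_mu K i x n a - cur_mu K i x n b)\<^sup>2
          / (1 / real (cur_N K i n a) + 1 / real (cur_N K i n b))
        \<ge> 2 * c_thr K s (phase_at K i n a * phase_at K i n b)
                (cur_N K i n a) (cur_N K i n b) \<delta>)"

definition stops_wrong :: "nat \<Rightarrow> real \<Rightarrow> real \<Rightarrow> nat \<Rightarrow> (nat \<Rightarrow> nat) \<Rightarrow> (nat \<Rightarrow> real) \<Rightarrow> bool" where
  "stops_wrong K s \<delta> astar i x \<longleftrightarrow>
     (\<exists>n. glr_stop K s \<delta> i x n) \<and>
     ahat K i x (LEAST n. glr_stop K s \<delta> i x n) \<noteq> astar"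

end

theory Submission
  imports Defs
begin

(*
  If the rule stops recommending an arm b other than astar, then b has the largest current
  estimate while mu b < mu astar, so the GLR condition for the pair (b, astar) forces
    (muhat_b - mu b) - (muhat_astar - mu astar) >= sqrt (2 c (1/N_b + 1/N_astar)),
  where c = c_{k1 k2}(N_b, N_astar, delta) for the current phases k1 of b and k2 of astar.
  A phase estimate is the mean of a fixed block of samples of its arm (for k >= 2 those
  numbered 2^(k-2), ..., 2^(k-1) - 1), so this is an event about two sample windows, and it
  persists once both windows are full.  The process exp (sum_t l_t (X_t - mu (I_t)) - l_t^2/2)
  is a supermartingale for predictable weights l_t; putting the weights theta/N_b and
  -theta/N_astar on the two windows and applying Markov's inequality with the best theta
  bounds the event by exp (-c) <= delta / ((K - 1) zeta(s)^2 (k1 k2)^s).  Summing over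
  k1, k2 >= 1 and over the K - 1 suboptimal arms gives delta.
*)

section \<open>Pull counts and phases of a trajectory\<close>

lemma cnt_0 [simp]: "cnt i 0 a = 0"
  unfolding cnt_def by simp

lemma cnt_1 [simp]: "cnt i (Suc 0) a = 0"
  unfolding cnt_def by simp

lemma cnt_Suc: "cnt i (Suc n) a = cnt i n a + (if 1 \<le> n \<and> i n = a then 1 else 0)"
proof -
  have "{t \<in> {1..<Suc n}. i t = a} =
      (if 1 \<le> n \<and> i n = a then insert n {t \<in> {1..<n}. i t = a} else {t \<in> {1..<n}. i t = a})"
    by (auto simp: less_Suc_eq)
  then show ?thesis
    unfolding cnt_def by simp
qed

lemma cnt_mono: "m \<le> n \<Longrightarrow> cnt i m a \<le> cnt i n a"
  unfolding cnt_def by (rule card_mono) auto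

lemma cnt_le: "cnt i n a \<le> n"
proof -
  have "cnt i n a \<le> card {1..<n}"
    unfolding cnt_def by (rule card_mono) auto
  then show ?thesis
    by simp
qed

lemma cnt_less: "1 \<le> t \<Longrightarrow> i t = a \<Longrightarrow> t < n \<Longrightarrow> cnt i t a < cnt i n a"
  using cnt_mono[of "Suc t" n i a] by (simp add: cnt_Suc)

lemma cnt_le_cnt_iff: "1 \<le> t \<Longrightarrow> i t = a \<Longrightarrow> cnt i m a \<le> cnt i t a \<longleftrightarrow> m \<le> t"
  using cnt_mono[of m t i a] cnt_less[of t i a m] by (auto simp: not_le[symmetric])

text \<open>Counts grow by unit steps, so the first round at which a count reaches a level
  hits it exactly.\<close>
lemma cnt_Least_ge:
  assumes "cnt i t a < m" and "\<exists>n>t. m \<le> cnt i n a"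
  shows "t < (LEAST n. t < n \<and> m \<le> cnt i n a)" and "cnt i (LEAST n. t < n \<and> m \<le> cnt i n a) a = m"
proof -
  define T where "T = (LEAST n. t < n \<and> m \<le> cnt i n a)"
  have T: "t < T" "m \<le> cnt i T a"
    using LeastI_ex[of "\<lambda>n. t < n \<and> m \<le> cnt i n a"] assms(2) unfolding T_def by auto
  then obtain p where p: "T = Suc p" "t \<le> p"
    by (cases T) auto
  have "cnt i p a < m"
  proof (cases "p = t")
    case False
    then have "\<not> (t < p \<and> m \<le> cnt i p a)"
      using not_less_Least[of p "\<lambda>n. t < n \<and> m \<le> cnt i n a"] p unfolding T_def by auto
    then show ?thesis
      using p False by auto
  qed (use assms in simp)
  then have "cnt i T a \<le> m"
    using p by (simp add: cnt_Suc)
  with T show "t < T" "cnt i T a = m"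
    by simp_all
qed

lemma first_pull:
  assumes "bij_betw i {1..K} {..<K}" and "a < K"
  obtains t0 where "{t \<in> {1..K}. i t = a} = {t0}"
proof -
  obtain t0 where t0: "t0 \<in> {1..K}" "i t0 = a"
    using assms by (metis bij_betw_def imageE lessThan_iff)
  then have "{t \<in> {1..K}. i t = a} = {t0}"
    using assms(1) unfolding bij_betw_def inj_on_def by blast
  then show ?thesis
    using that by blast
qed

lemma cnt_init:
  assumes "bij_betw i {1..K} {..<K}" and "a < K"
  shows "cnt i (K + 1) a = 1"
proof -
  obtain t0 where "{t \<in> {1..K}. i t = a} = {t0}"
    using first_pull[OF assms] .
  moreover have "{1..<K + 1} = {1..K}"
    by auto
  ultimately show ?thesis
    unfolding cnt_def by simp
qed

text \<open>The pull of arm \<open>a\<close> at round \<open>t\<close> yields its sample number \<open>cnt i t a\<close>, counting from \<open>0\<close>.\<close>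
definition sample_window :: "(nat \<Rightarrow> nat) \<Rightarrow> nat \<Rightarrow> nat \<Rightarrow> nat \<Rightarrow> nat \<Rightarrow> nat set" where
  "sample_window i n a l h = {t \<in> {1..<n}. i t = a \<and> l \<le> cnt i t a \<and> cnt i t a < h}"

definition window_mean :: "(nat \<Rightarrow> nat) \<Rightarrow> (nat \<Rightarrow> real) \<Rightarrow> nat \<Rightarrow> nat \<Rightarrow> nat \<Rightarrow> nat \<Rightarrow> real" where
  "window_mean i x n a l h = (\<Sum>t\<in>sample_window i n a l h. x t) / real (h - l)"

lemma sum_sample_window:
  "(\<Sum>t\<in>sample_window i n a l h. x t) =
     (\<Sum>t\<in>{1..<n}. if i t = a \<and> l \<le> cnt i t a \<and> cnt i t a < h then x t else 0)"
  unfolding sample_window_def by (rule sum.inter_filter) simp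

lemma card_sample_window:
  assumes "l \<le> h"
  shows "card (sample_window i n a l h) = min h (cnt i n a) - min l (cnt i n a)"
proof (induction n)
  case (Suc n)
  show ?case
  proof (cases "1 \<le> n \<and> i n = a \<and> l \<le> cnt i n a \<and> cnt i n a < h")
    case True
    then have "sample_window i (Suc n) a l h = insert n (sample_window i n a l h)"
      unfolding sample_window_def by (auto simp: less_Suc_eq)
    then show ?thesis
      using Suc True assms by (simp add: cnt_Suc sample_window_def Suc_diff_le)
  next
    case False
    then have "sample_window i (Suc n) a l h = sample_window i n a l h"
      unfolding sample_window_def by (auto simp: less_Suc_eq)
    moreover have "min h (cnt i (Suc n) a) - min l (cnt i (Suc n) a) =
        min h (cnt i n a) - min l (cnt i n a)"
      using False assms by (auto simp: cnt_Suc)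
    ultimately show ?thesis
      using Suc by simp
  qed
qed (simp add: sample_window_def)

lemma card_full_sample_window: "l \<le> h \<Longrightarrow> h \<le> cnt i n a \<Longrightarrow> card (sample_window i n a l h) = h - l"
  by (simp add: card_sample_window)

lemma sample_window_Suc: "h \<le> cnt i n a \<Longrightarrow> sample_window i (Suc n) a l h = sample_window i n a l h"
  unfolding sample_window_def by (auto simp: less_Suc_eq)

lemma sample_window_cnt:
  assumes "1 \<le> m" "m \<le> T" "T \<le> n"
  shows "sample_window i n a (cnt i m a) (cnt i T a) = {t \<in> {m..<T}. i t = a}"
  using assms cnt_le_cnt_iff[of _ i a] unfolding sample_window_def
  by (auto simp: not_le[symmetric])

text \<open>Phase \<open>k \<ge> 1\<close> of an arm consists of its samples number \<open>phase_lo k, \<dots>, phase_hi k - 1\<close>.\<close>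
definition phase_lo :: "nat \<Rightarrow> nat" where
  "phase_lo k = (if k \<le> 1 then 0 else 2 ^ (k - 2))"

definition phase_hi :: "nat \<Rightarrow> nat" where
  "phase_hi k = 2 ^ (k - 1)"

definition phase_len :: "nat \<Rightarrow> nat" where
  "phase_len k = phase_hi k - phase_lo k"

definition phase_of_count :: "nat \<Rightarrow> nat" where
  "phase_of_count c = (GREATEST k. 1 \<le> k \<and> (k = 1 \<or> 2 ^ (k - 1) \<le> c))"

lemma phase_lo_less_hi: "phase_lo k < phase_hi k"
  unfolding phase_lo_def phase_hi_def by (auto intro: power_strict_increasing)

lemma phase_len_pos: "0 < phase_len k"
  using phase_lo_less_hi[of k] unfolding phase_len_def by simp

lemma phase_lo_Suc: "1 \<le> k \<Longrightarrow> phase_lo (Suc k) = phase_hi k"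
  unfolding phase_lo_def phase_hi_def by simp

lemma phase_of_count:
  "1 \<le> phase_of_count c" "phase_of_count c = 1 \<or> 2 ^ (phase_of_count c - 1) \<le> c"
proof -
  let ?P = "\<lambda>k::nat. 1 \<le> k \<and> (k = 1 \<or> 2 ^ (k - 1) \<le> c)"
  have "k \<le> Suc c" if "?P k" for k
  proof (cases "k = 1")
    case False
    with that have "2 ^ (k - 1) \<le> c"
      by simp
    then have "k - 1 < c"
      using less_exp[of "k - 1"] by linarith
    then show ?thesis
      by simp
  qed simp
  then have "?P (Greatest ?P)"
    using GreatestI_nat[of ?P 1 "Suc c"] by blast
  then show "1 \<le> phase_of_count c" "phase_of_count c = 1 \<or> 2 ^ (phase_of_count c - 1) \<le> c"
    unfolding phase_of_count_def by blast+
qed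

lemma phase_hi_phase_of_count: "1 \<le> c \<Longrightarrow> phase_hi (phase_of_count c) \<le> c"
  using phase_of_count(2)[of c] unfolding phase_hi_def by auto

lemma phase_T_Some:
  assumes "bij_betw i {1..K} {..<K}" "a < K" and "phase_T K i a k = Some T"
  shows "1 \<le> k" "K + 1 \<le> T" "cnt i T a = phase_hi k"
    "2 \<le> k \<Longrightarrow> \<exists>T'. phase_T K i a (k - 1) = Some T' \<and> T' < T"
proof -
  have "1 \<le> k \<and> K + 1 \<le> T \<and> cnt i T a = phase_hi k \<and>
      (2 \<le> k \<longrightarrow> (\<exists>T'. phase_T K i a (k - 1) = Some T' \<and> T' < T))"
    using assms(3)
  proof (induction k arbitrary: T)
    case (Suc k)
    show ?case
    proof (cases "k = 0")
      case True
      then show ?thesis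
        using Suc.prems cnt_init[OF assms(1,2)] by (simp add: phase_hi_def)
    next
      case False
      then obtain t where t: "phase_T K i a k = Some t"
        using Suc.prems by (cases "phase_T K i a k") auto
      have IH: "K + 1 \<le> t" "cnt i t a = 2 ^ (k - 1)"
        using Suc.IH[OF t] by (auto simp: phase_hi_def)
      let ?P = "\<lambda>n. t < n \<and> 2 * cnt i t a \<le> cnt i n a"
      have ex: "\<exists>n>t. 2 * cnt i t a \<le> cnt i n a" and T: "T = (LEAST n. ?P n)"
        using Suc.prems False t by (auto split: if_splits)
      have "cnt i t a < 2 * cnt i t a"
        using IH by simp
      then have "t < T" "cnt i T a = 2 * cnt i t a"
        unfolding T using cnt_Least_ge[OF _ ex] by blast+
      with IH False show ?thesis
        using t by (cases k) (auto simp: phase_hi_def)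
    qed
  qed simp
  then show "1 \<le> k" "K + 1 \<le> T" "cnt i T a = phase_hi k"
    "2 \<le> k \<Longrightarrow> \<exists>T'. phase_T K i a (k - 1) = Some T' \<and> T' < T"
    by blast+
qed

lemma phase_T_exists:
  assumes "bij_betw i {1..K} {..<K}" "a < K" "K + 1 \<le> n"
    and "1 \<le> k" "k = 1 \<or> 2 ^ (k - 1) \<le> cnt i n a"
  shows "\<exists>T\<le>n. phase_T K i a k = Some T"
  using assms(4,5)
proof (induction k)
  case (Suc k)
  show ?case
  proof (cases "k = 0")
    case True
    then show ?thesis
      using assms(3) by simp
  next
    case False
    have c: "2 * 2 ^ (k - 1) \<le> cnt i n a"
      using Suc.prems False by (cases k) auto
    then obtain t where t: "phase_T K i a k = Some t" "t \<le> n"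
      using Suc.IH False by fastforce
    have ct: "cnt i t a = 2 ^ (k - 1)"
      using phase_T_Some(3)[OF assms(1,2) t(1)] by (simp add: phase_hi_def)
    then have "t < n"
      using t(2) c cnt_mono[of n t i a] by (cases "t = n") auto
    with ct c have "t < n \<and> 2 * cnt i t a \<le> cnt i n a"
      by simp
    then show ?thesis
      using False t by (auto intro: Least_le)
  qed
qed simp

lemma phase_started_iff:
  assumes "bij_betw i {1..K} {..<K}" "a < K" "K + 1 \<le> n"
  shows "(\<exists>T. phase_T K i a k = Some T \<and> T \<le> n) \<longleftrightarrow> 1 \<le> k \<and> (k = 1 \<or> 2 ^ (k - 1) \<le> cnt i n a)"
proof
  assume "\<exists>T. phase_T K i a k = Some T \<and> T \<le> n"
  then obtain T where T: "phase_T K i a k = Some T" "T \<le> n"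
    by blast
  then show "1 \<le> k \<and> (k = 1 \<or> 2 ^ (k - 1) \<le> cnt i n a)"
    using phase_T_Some[OF assms(1,2) T(1)] cnt_mono[OF T(2), of i a]
    by (auto simp: phase_hi_def)
qed (use phase_T_exists[OF assms] in blast)

lemma phase_at_eq:
  assumes "bij_betw i {1..K} {..<K}" "a < K" "K + 1 \<le> n"
  shows "phase_at K i n a = phase_of_count (cnt i n a)"
  unfolding phase_at_def phase_of_count_def using phase_started_iff[OF assms] by simp

lemma phase_T_window:
  assumes "bij_betw i {1..K} {..<K}" "a < K" and T: "phase_T K i a k = Some T"
  obtains T' where "1 \<le> T'" "T' \<le> T" "cnt i T' a = phase_lo k" "Ntil K i k a = cnt i T a - cnt i T' a"
    "muhat K i x k a = (\<Sum>t\<in>{T'..<T}. if i t = a then x t else 0) / real (Ntil K i k a)"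
proof (cases "k = 1")
  case True
  obtain t0 where t0: "{t \<in> {1..K}. i t = a} = {t0}"
    using first_pull[OF assms(1,2)] .
  then have "(THE t. t \<in> {1..K} \<and> i t = a) = t0"
    by blast
  moreover have "(\<Sum>t\<in>{1..<K + 1}. if i t = a then x t else 0) = x t0"
    using t0 by (simp add: sum.inter_filter[symmetric] atLeastLessThanSuc_atLeastAtMost)
  ultimately show ?thesis
    using True T phase_T_Some(3)[OF assms(1,2) T]
    by (intro that[of 1]) (auto simp: muhat_def Ntil_def phase_lo_def phase_hi_def)
next
  case False
  then have "2 \<le> k"
    using phase_T_Some(1)[OF assms(1,2) T] by simp
  then obtain T' where T': "phase_T K i a (k - 1) = Some T'" "T' < T"
    using phase_T_Some(4)[OF assms(1,2) T] by blast
  have "cnt i T' a = phase_lo k"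
    using phase_T_Some[OF assms(1,2) T'(1)] \<open>2 \<le> k\<close> phase_lo_Suc[of "k - 1"] by simp
  then show ?thesis
    using False T T' phase_T_Some(2)[OF assms(1,2) T'(1)]
    by (intro that[of T']) (auto simp: muhat_def Ntil_def)
qed

lemma muhat_eq_window_mean:
  assumes "bij_betw i {1..K} {..<K}" "a < K" and T: "phase_T K i a k = Some T" "T \<le> n"
  shows "Ntil K i k a = phase_len k" "muhat K i x k a = window_mean i x n a (phase_lo k) (phase_hi k)"
proof -
  obtain T' where T': "1 \<le> T'" "T' \<le> T" "cnt i T' a = phase_lo k"
    and N: "Ntil K i k a = cnt i T a - cnt i T' a"
    and mu: "muhat K i x k a = (\<Sum>t\<in>{T'..<T}. if i t = a then x t else 0) / real (Ntil K i k a)"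
    using phase_T_window[OF assms(1-3)] by blast
  have cT: "cnt i T a = phase_hi k"
    using phase_T_Some(3)[OF assms(1,2) T(1)] .
  show "Ntil K i k a = phase_len k"
    using N T' cT by (simp add: phase_len_def)
  have "sample_window i n a (phase_lo k) (phase_hi k) = {t \<in> {T'..<T}. i t = a}"
    using sample_window_cnt[OF T'(1,2) T(2), of i a] T'(3) cT by simp
  then have "(\<Sum>t\<in>sample_window i n a (phase_lo k) (phase_hi k). x t) =
      (\<Sum>t\<in>{T'..<T}. if i t = a then x t else 0)"
    by (simp only: sum.inter_filter finite_atLeastLessThan)
  then show "muhat K i x k a = window_mean i x n a (phase_lo k) (phase_hi k)"
    using mu N T' cT by (simp add: window_mean_def phase_len_def)
qed

definition phase_mean :: "(nat \<Rightarrow> nat) \<Rightarrow> (nat \<Rightarrow> real) \<Rightarrow> nat \<Rightarrow> nat \<Rightarrow> real" where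
  "phase_mean i x n a =
     window_mean i x n a (phase_lo (phase_of_count (cnt i n a))) (phase_hi (phase_of_count (cnt i n a)))"

lemma current_estimates_eq:
  assumes "bij_betw i {1..K} {..<K}" "a < K" "K + 1 \<le> n"
  shows "phase_at K i n a = phase_of_count (cnt i n a)"
    "cur_N K i n a = phase_len (phase_of_count (cnt i n a))"
    "cur_mu K i x n a = phase_mean i x n a"
proof -
  obtain T where "phase_T K i a (phase_of_count (cnt i n a)) = Some T" "T \<le> n"
    using phase_T_exists[OF assms phase_of_count] by blast
  then show "phase_at K i n a = phase_of_count (cnt i n a)"
    "cur_N K i n a = phase_len (phase_of_count (cnt i n a))"
    "cur_mu K i x n a = phase_mean i x n a"
    using muhat_eq_window_mean[OF assms(1,2)] phase_at_eq[OF assms]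
    by (simp_all add: cur_N_def cur_mu_def phase_mean_def)
qed

section \<open>The stopping rule in terms of pull counts\<close>

definition empirical_best :: "nat \<Rightarrow> (nat \<Rightarrow> real) \<Rightarrow> nat" where
  "empirical_best K m = (LEAST a. a < K \<and> (\<forall>b<K. m b \<le> m a))"

definition glr_test :: "nat \<Rightarrow> real \<Rightarrow> real \<Rightarrow> (nat \<Rightarrow> real) \<Rightarrow> (nat \<Rightarrow> nat) \<Rightarrow> (nat \<Rightarrow> nat) \<Rightarrow> bool" where
  "glr_test K s \<delta> m N k \<longleftrightarrow> (let a = empirical_best K m in
     \<forall>b<K. b \<noteq> a \<longrightarrow>
       2 * c_thr K s (k a * k b) (N a) (N b) \<delta> \<le> (m a - m b)\<^sup>2 / (1 / real (N a) + 1 / real (N b)))"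

lemma ahat_eq_empirical_best: "ahat K i x n = empirical_best K (cur_mu K i x n)"
  unfolding ahat_def empirical_best_def ..

lemma glr_stop_eq_glr_test:
  "glr_stop K s \<delta> i x n \<longleftrightarrow> K + 1 \<le> n \<and> glr_test K s \<delta> (cur_mu K i x n) (cur_N K i n) (phase_at K i n)"
  unfolding glr_stop_def glr_test_def ahat_eq_empirical_best by simp

lemma empirical_best:
  assumes "0 < K"
  shows "empirical_best K m < K" "b < K \<Longrightarrow> m b \<le> m (empirical_best K m)"
proof -
  have "Max (m ` {..<K}) \<in> m ` {..<K}"
    using assms by (intro Max_in) auto
  then obtain a where "a < K" "m a = Max (m ` {..<K})"
    by auto
  then have "a < K \<and> (\<forall>b<K. m b \<le> m a)"
    by simp
  then have "empirical_best K m < K \<and> (\<forall>b<K. m b \<le> m (empirical_best K m))"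
    unfolding empirical_best_def by (rule LeastI)
  then show "empirical_best K m < K" "b < K \<Longrightarrow> m b \<le> m (empirical_best K m)"
    by auto
qed

lemma empirical_best_cong: "(\<And>a. a < K \<Longrightarrow> m a = m' a) \<Longrightarrow> empirical_best K m = empirical_best K m'"
  unfolding empirical_best_def by (intro arg_cong[where f = Least] ext) auto

lemma glr_test_cong:
  assumes "0 < K" and "\<And>a. a < K \<Longrightarrow> m a = m' a \<and> N a = N' a \<and> k a = k' a"
  shows "glr_test K s \<delta> m N k = glr_test K s \<delta> m' N' k'"
  using empirical_best(1)[OF assms(1), of m] empirical_best_cong[of K m m'] assms(2)
  unfolding glr_test_def Let_def by auto

definition count_glr_stop :: "nat \<Rightarrow> real \<Rightarrow> real \<Rightarrow> (nat \<Rightarrow> nat) \<Rightarrow> (nat \<Rightarrow> real) \<Rightarrow> nat \<Rightarrow> bool" where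
  "count_glr_stop K s \<delta> i x n \<longleftrightarrow> K + 1 \<le> n \<and>
     glr_test K s \<delta> (phase_mean i x n) (\<lambda>a. phase_len (phase_of_count (cnt i n a)))
       (\<lambda>a. phase_of_count (cnt i n a))"

lemma glr_stop_eq_count_glr_stop:
  assumes "bij_betw i {1..K} {..<K}" "0 < K"
  shows "glr_stop K s \<delta> i x = count_glr_stop K s \<delta> i x"
proof
  fix n
  show "glr_stop K s \<delta> i x n = count_glr_stop K s \<delta> i x n"
  proof (cases "K + 1 \<le> n")
    case True
    then have "glr_test K s \<delta> (cur_mu K i x n) (cur_N K i n) (phase_at K i n) =
        glr_test K s \<delta> (phase_mean i x n) (\<lambda>a. phase_len (phase_of_count (cnt i n a)))
          (\<lambda>a. phase_of_count (cnt i n a))"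
      using current_estimates_eq[OF assms(1) _ True] by (intro glr_test_cong[OF assms(2)]) simp
    then show ?thesis
      unfolding glr_stop_eq_glr_test count_glr_stop_def by simp
  qed (simp add: glr_stop_eq_glr_test count_glr_stop_def)
qed

lemma stops_wrong_iff_count_glr_stop:
  assumes "bij_betw i {1..K} {..<K}" "0 < K"
  shows "stops_wrong K s \<delta> astar i x \<longleftrightarrow> (\<exists>n. count_glr_stop K s \<delta> i x n) \<and>
    empirical_best K (phase_mean i x (LEAST n. count_glr_stop K s \<delta> i x n)) \<noteq> astar"
proof (cases "\<exists>n. count_glr_stop K s \<delta> i x n")
  case True
  let ?n = "LEAST n. count_glr_stop K s \<delta> i x n"
  have "K + 1 \<le> ?n"
    using LeastI_ex[OF True] unfolding count_glr_stop_def by simp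
  then have "ahat K i x ?n = empirical_best K (phase_mean i x ?n)"
    unfolding ahat_eq_empirical_best using current_estimates_eq(3)[OF assms(1)]
    by (intro empirical_best_cong) simp
  then show ?thesis
    unfolding stops_wrong_def glr_stop_eq_count_glr_stop[OF assms] by simp
qed (simp add: stops_wrong_def glr_stop_eq_count_glr_stop[OF assms])

lemma measurable_cnt:
  assumes "\<And>t. 1 \<le> t \<Longrightarrow> t < n \<Longrightarrow> I t \<in> measurable N (count_space UNIV)"
  shows "(\<lambda>\<omega>. cnt (\<lambda>t. I t \<omega>) n a) \<in> measurable N (count_space UNIV)"
  using assms
proof (induction n)
  case (Suc n)
  then have [measurable]: "(\<lambda>\<omega>. cnt (\<lambda>t. I t \<omega>) n a) \<in> measurable N (count_space UNIV)"
    by simp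
  show ?case
  proof (cases "1 \<le> n")
    case True
    then have [measurable]: "I n \<in> measurable N (count_space UNIV)"
      using Suc.prems by simp
    show ?thesis
      unfolding cnt_Suc by measurable
  qed (simp add: cnt_Suc)
qed simp

lemma borel_measurable_window_mean:
  assumes "\<And>t. 1 \<le> t \<Longrightarrow> t < n \<Longrightarrow> I t \<in> measurable N (count_space UNIV)"
    and "\<And>t. 1 \<le> t \<Longrightarrow> t < n \<Longrightarrow> X t \<in> borel_measurable N"
  shows "(\<lambda>\<omega>. window_mean (\<lambda>t. I t \<omega>) (\<lambda>t. X t \<omega>) n a l h) \<in> borel_measurable N"
  unfolding window_mean_def sum_sample_window
proof (intro borel_measurable_divide borel_measurable_sum borel_measurable_const)
  fix t assume t: "t \<in> {1..<n}"
  then have [measurable]: "I t \<in> measurable N (count_space UNIV)" "X t \<in> borel_measurable N"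
    "(\<lambda>\<omega>. cnt (\<lambda>t. I t \<omega>) t a) \<in> measurable N (count_space UNIV)"
    using assms by (auto intro: measurable_cnt)
  show "(\<lambda>\<omega>. if I t \<omega> = a \<and> l \<le> cnt (\<lambda>t. I t \<omega>) t a \<and> cnt (\<lambda>t. I t \<omega>) t a < h then X t \<omega> else 0)
      \<in> borel_measurable N"
    by measurable
qed

lemma borel_measurable_phase_mean:
  assumes "\<And>t. 1 \<le> t \<Longrightarrow> I t \<in> measurable N (count_space UNIV)"
    and "\<And>t. 1 \<le> t \<Longrightarrow> X t \<in> borel_measurable N"
  shows "(\<lambda>\<omega>. phase_mean (\<lambda>t. I t \<omega>) (\<lambda>t. X t \<omega>) n a) \<in> borel_measurable N"
proof -
  have [measurable]: "(\<lambda>\<omega>. cnt (\<lambda>t. I t \<omega>) n a) \<in> measurable N (count_space UNIV)"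
    using assms(1) by (rule measurable_cnt)
  have [measurable]: "(\<lambda>\<omega>. window_mean (\<lambda>t. I t \<omega>) (\<lambda>t. X t \<omega>) n a l h) \<in> borel_measurable N" for l h
    using assms by (rule borel_measurable_window_mean)
  show ?thesis
    unfolding phase_mean_def by measurable
qed

lemma measurable_empirical_best:
  assumes [measurable]: "\<And>a. (\<lambda>\<omega>. m \<omega> a) \<in> borel_measurable N"
  shows "(\<lambda>\<omega>. empirical_best K (m \<omega>)) \<in> measurable N (count_space UNIV)"
  unfolding empirical_best_def by measurable

lemma borel_measurable_count_fun3:
  fixes F :: "nat \<Rightarrow> nat \<Rightarrow> nat \<Rightarrow> real"
  assumes "f \<in> measurable N (count_space UNIV)" "g \<in> measurable N (count_space UNIV)"
    "h \<in> measurable N (count_space UNIV)"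
  shows "(\<lambda>\<omega>. F (f \<omega>) (g \<omega>) (h \<omega>)) \<in> borel_measurable N"
  by (rule measurable_compose_countable[OF measurable_compose_countable[OF
        measurable_compose_countable[OF _ assms(3)] assms(2)] assms(1)]) simp

lemma pred_glr_test:
  assumes [measurable]: "\<And>a. (\<lambda>\<omega>. m \<omega> a) \<in> borel_measurable N"
    "\<And>a. (\<lambda>\<omega>. L \<omega> a) \<in> measurable N (count_space UNIV)"
    "\<And>a. (\<lambda>\<omega>. k \<omega> a) \<in> measurable N (count_space UNIV)"
  shows "Measurable.pred N (\<lambda>\<omega>. glr_test K s \<delta> (m \<omega>) (L \<omega>) (k \<omega>))"
proof -
  have [measurable]: "(\<lambda>\<omega>. empirical_best K (m \<omega>)) \<in> measurable N (count_space UNIV)"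
    by (rule measurable_empirical_best) simp
  have [measurable]: "(\<lambda>\<omega>. k \<omega> a * k \<omega> b) \<in> measurable N (count_space UNIV)" for a b
    by measurable
  have [measurable]: "(\<lambda>\<omega>. c_thr K s (k \<omega> a * k \<omega> b) (L \<omega> a) (L \<omega> b) \<delta>) \<in> borel_measurable N" for a b
    by (rule borel_measurable_count_fun3) measurable
  have [measurable]: "(\<lambda>\<omega>. real (L \<omega> a)) \<in> borel_measurable N" for a
    by measurable
  have "(\<lambda>\<omega>. glr_test K s \<delta> (m \<omega>) (L \<omega>) (k \<omega>)) = (\<lambda>\<omega>. \<forall>a. empirical_best K (m \<omega>) = a \<longrightarrow>
      (\<forall>b<K. b \<noteq> a \<longrightarrow> 2 * c_thr K s (k \<omega> a * k \<omega> b) (L \<omega> a) (L \<omega> b) \<delta> \<le>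
        (m \<omega> a - m \<omega> b)\<^sup>2 / (1 / real (L \<omega> a) + 1 / real (L \<omega> b))))"
    by (simp add: fun_eq_iff glr_test_def Let_def)
  then show ?thesis
    by (simp only:) measurable
qed

lemma sets_Collect_value_at_Least:
  fixes f :: "nat \<Rightarrow> 'a \<Rightarrow> 'b::countable"
  assumes [measurable]: "\<And>n. Measurable.pred N (P n)" and f: "\<And>n. f n \<in> measurable N (count_space UNIV)"
  shows "{\<omega>\<in>space N. (\<exists>n. P n \<omega>) \<and> f (LEAST n. P n \<omega>) \<omega> \<noteq> c} \<in> sets N"
proof -
  have [measurable]: "(\<lambda>\<omega>. f (LEAST n. P n \<omega>) \<omega>) \<in> measurable N (count_space UNIV)"
    by (rule measurable_compose_countable[OF f]) measurable
  show ?thesis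
    by measurable
qed

lemma sets_stops_wrong:
  assumes "\<And>t. 1 \<le> t \<Longrightarrow> I t \<in> measurable N (count_space UNIV)"
    and "\<And>t. 1 \<le> t \<Longrightarrow> X t \<in> borel_measurable N"
    and "\<forall>\<omega>\<in>space N. bij_betw (\<lambda>t. I t \<omega>) {1..K} {..<K}" and "0 < K"
  shows "{\<omega>\<in>space N. stops_wrong K s \<delta> astar (\<lambda>t. I t \<omega>) (\<lambda>t. X t \<omega>)} \<in> sets N"
proof -
  have [measurable]: "(\<lambda>\<omega>. cnt (\<lambda>t. I t \<omega>) n a) \<in> measurable N (count_space UNIV)" for n a
    using assms(1) by (rule measurable_cnt)
  have [measurable]: "(\<lambda>\<omega>. phase_mean (\<lambda>t. I t \<omega>) (\<lambda>t. X t \<omega>) n a) \<in> borel_measurable N" for n a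
    using assms(1,2) by (rule borel_measurable_phase_mean)
  have [measurable]: "Measurable.pred N (\<lambda>\<omega>. count_glr_stop K s \<delta> (\<lambda>t. I t \<omega>) (\<lambda>t. X t \<omega>) n)" for n
    unfolding count_glr_stop_def by (intro pred_intros_conj1' pred_glr_test) measurable
  have [measurable]: "(\<lambda>\<omega>. empirical_best K (phase_mean (\<lambda>t. I t \<omega>) (\<lambda>t. X t \<omega>) n))
      \<in> measurable N (count_space UNIV)" for n
    by (rule measurable_empirical_best) simp
  have "{\<omega>\<in>space N. stops_wrong K s \<delta> astar (\<lambda>t. I t \<omega>) (\<lambda>t. X t \<omega>)} =
    {\<omega>\<in>space N. (\<exists>n. count_glr_stop K s \<delta> (\<lambda>t. I t \<omega>) (\<lambda>t. X t \<omega>) n) \<and>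
      empirical_best K (phase_mean (\<lambda>t. I t \<omega>) (\<lambda>t. X t \<omega>)
        (LEAST n. count_glr_stop K s \<delta> (\<lambda>t. I t \<omega>) (\<lambda>t. X t \<omega>) n)) \<noteq> astar}"
    using assms(3) by (intro Collect_cong conj_cong refl stops_wrong_iff_count_glr_stop assms(4)) blast
  also have "\<dots> \<in> sets N"
    by (rule sets_Collect_value_at_Least) measurable
  finally show ?thesis .
qed

lemma glr_test_gap:
  assumes "0 < K" "glr_test K s \<delta> m N k" "a < K" "a \<noteq> empirical_best K m"
    and "0 < N a" "0 < N (empirical_best K m)"
  shows "sqrt (2 * c_thr K s (k (empirical_best K m) * k a) (N (empirical_best K m)) (N a) \<delta> *
      (1 / real (N (empirical_best K m)) + 1 / real (N a))) \<le> m (empirical_best K m) - m a"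
proof -
  define b where "b = empirical_best K m"
  define v where "v = 1 / real (N b) + 1 / real (N a)"
  have "0 < v"
    unfolding v_def b_def using assms(5,6) by (simp add: add_pos_pos)
  have "2 * c_thr K s (k b * k a) (N b) (N a) \<delta> \<le> (m b - m a)\<^sup>2 / v"
    using assms(2-4) unfolding glr_test_def Let_def b_def[symmetric] v_def by auto
  then have "2 * c_thr K s (k b * k a) (N b) (N a) \<delta> * v \<le> (m b - m a)\<^sup>2"
    using \<open>0 < v\<close> by (simp add: pos_le_divide_eq)
  then have "sqrt (2 * c_thr K s (k b * k a) (N b) (N a) \<delta> * v) \<le> sqrt ((m b - m a)\<^sup>2)"
    by (rule real_sqrt_le_mono)
  also have "\<dots> = m b - m a"
    using empirical_best(2)[OF assms(1,3), of m] unfolding b_def by simp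
  finally show ?thesis
    unfolding b_def v_def .
qed

lemma wrong_stop_phase_gap:
  assumes "bij_betw i {1..K} {..<K}" "astar < K" "\<forall>b<K. b \<noteq> astar \<longrightarrow> \<mu> b < \<mu> astar"
    and "stops_wrong K s \<delta> astar i x"
  obtains b n k1 k2 where "b < K" "b \<noteq> astar" "1 \<le> k1" "1 \<le> k2"
    "phase_hi k1 \<le> cnt i n b" "phase_hi k2 \<le> cnt i n astar"
    "sqrt (2 * c_thr K s (k1 * k2) (phase_len k1) (phase_len k2) \<delta> *
        (1 / real (phase_len k1) + 1 / real (phase_len k2)))
      \<le> (window_mean i x n b (phase_lo k1) (phase_hi k1) - \<mu> b)
        - (window_mean i x n astar (phase_lo k2) (phase_hi k2) - \<mu> astar)"
proof -
  have K: "0 < K"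
    using assms(2) by simp
  define n where "n = (LEAST n. count_glr_stop K s \<delta> i x n)"
  define m where "m = phase_mean i x n"
  define b where "b = empirical_best K m"
  define k1 where "k1 = phase_of_count (cnt i n b)"
  define k2 where "k2 = phase_of_count (cnt i n astar)"
  have stop: "count_glr_stop K s \<delta> i x n" and "b \<noteq> astar"
    using assms(4) unfolding stops_wrong_iff_count_glr_stop[OF assms(1) K] n_def m_def b_def
    by (auto intro: LeastI_ex)
  have "b < K"
    unfolding b_def using empirical_best(1)[OF K] .
  have "K + 1 \<le> n"
    using stop unfolding count_glr_stop_def by simp
  then have "1 \<le> cnt i n a" if "a < K" for a
    using cnt_mono[of "K + 1" n i a] cnt_init[OF assms(1) that] by simp
  then have hi: "phase_hi k1 \<le> cnt i n b" "phase_hi k2 \<le> cnt i n astar"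
    unfolding k1_def k2_def using \<open>b < K\<close> assms(2) by (auto intro: phase_hi_phase_of_count)
  have "glr_test K s \<delta> m (\<lambda>a. phase_len (phase_of_count (cnt i n a))) (\<lambda>a. phase_of_count (cnt i n a))"
    using stop unfolding count_glr_stop_def m_def by simp
  from glr_test_gap[OF K this assms(2)] \<open>b \<noteq> astar\<close>
  have "sqrt (2 * c_thr K s (k1 * k2) (phase_len k1) (phase_len k2) \<delta> *
      (1 / real (phase_len k1) + 1 / real (phase_len k2))) \<le> m b - m astar"
    using phase_len_pos by (simp add: b_def[symmetric] k1_def[symmetric] k2_def[symmetric])
  also have "\<dots> \<le> (m b - \<mu> b) - (m astar - \<mu> astar)"
    using assms(3) \<open>b < K\<close> \<open>b \<noteq> astar\<close> by fastforce
  finally show ?thesis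
    using that[OF \<open>b < K\<close> \<open>b \<noteq> astar\<close> phase_of_count(1) phase_of_count(1) hi[unfolded k1_def k2_def]]
    unfolding m_def phase_mean_def k1_def k2_def by simp
qed

section \<open>The threshold\<close>

lemma summable_zeta_r: "1 < s \<Longrightarrow> summable (\<lambda>n. 1 / real (Suc n) powr s)"
  using summable_real_powr_iff[of "-s"] summable_Suc_iff[of "\<lambda>n. real n powr - s"]
  by (simp add: powr_minus_divide)

lemma zeta_r_ge_1: "1 < s \<Longrightarrow> 1 \<le> zeta_r s"
  using sum_le_suminf[OF summable_zeta_r, of s "{0}"] unfolding zeta_r_def by simp

lemma ln_4_bounds: "1 \<le> ln (4::real)" "ln (4::real) \<le> 2"
proof -
  have "exp 1 \<le> (4::real)"
    using exp_le by simp
  then show "1 \<le> ln (4::real)"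
    by (simp add: ln_ge_iff)
  have "(4::real) \<le> exp 2"
    using exp_lower_Taylor_quadratic[of 2] by simp
  then have "ln (4::real) \<le> ln (exp 2)"
    by (subst ln_le_cancel_iff) auto
  then show "ln (4::real) \<le> 2"
    by simp
qed

lemma g_G_ge:
  assumes "1/2 < l" "l < 1"
  shows "2 - 2 * ln 4 \<le> g_G l"
proof -
  have "2 * l * ln (4 * l) \<le> 2 * l * ln 4"
    using assms by (intro mult_left_mono) auto
  moreover have "0 \<le> 2 * (1 - l) * (ln 4 - 1)"
    using assms ln_4_bounds by simp
  moreover have "0 \<le> ln (zeta_r (2 * l))" "ln (1 - l) \<le> 0"
    using zeta_r_ge_1[of "2 * l"] assms by simp_all
  ultimately show ?thesis
    unfolding g_G_def by (simp add: algebra_simps)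
qed

lemma C_G_ge:
  assumes "0 \<le> x"
  shows "x + 4 - 4 * ln 4 \<le> C_G x"
  unfolding C_G_def
proof (rule cInf_greatest)
  fix y assume "y \<in> (\<lambda>l. (g_G l + x) / l) ` {1/2<..<1}"
  then obtain l where l: "1/2 < l" "l < 1" and y: "y = (g_G l + x) / l"
    by auto
  have "(2 - 2 * ln 4) * (2 * l - 1) \<le> 0"
    using l ln_4_bounds by (intro mult_nonpos_nonneg) auto
  then have "l * (x + 4 - 4 * ln 4) \<le> g_G l + x"
    using g_G_ge[OF l] mult_left_mono[OF l(2)[THEN less_imp_le] assms] by (simp add: algebra_simps)
  then show "x + 4 - 4 * ln 4 \<le> y"
    unfolding y using l by (simp add: pos_le_divide_eq mult.commute)
qed (auto intro: exI[of _ "3/4"])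

lemma ln_le_c_thr:
  assumes "2 \<le> K" "0 < \<delta>" "\<delta> \<le> 1" "1 < s" "1 \<le> k" "1 \<le> N1" "1 \<le> N2"
  shows "1 \<le> (real K - 1) * (zeta_r s)\<^sup>2 * real k powr s / \<delta>"
    "ln ((real K - 1) * (zeta_r s)\<^sup>2 * real k powr s / \<delta>) \<le> c_thr K s k N1 N2 \<delta>"
proof -
  define y where "y = (real K - 1) * (zeta_r s)\<^sup>2 * real k powr s / \<delta>"
  have "1 \<le> (zeta_r s)\<^sup>2" "1 \<le> real k powr s" "1 \<le> real K - 1"
    using zeta_r_ge_1[OF assms(4)] assms by (simp_all add: ge_one_powr_ge_zero)
  then have "1 \<le> (real K - 1) * (zeta_r s)\<^sup>2 * real k powr s"
    by (metis mult_mono' mult_1 zero_le_one)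
  then show "1 \<le> y"
    unfolding y_def using assms(2,3) by (simp add: le_divide_eq)
  then have "0 \<le> ln y"
    by simp
  have ln_4_le: "ln 4 \<le> ln (4 + ln (real N))" if "1 \<le> N" for N
  proof -
    have "0 \<le> ln (real N)"
      using that by simp
    then show ?thesis
      by (subst ln_le_cancel_iff) auto
  qed
  have "1/2 * ln y + 4 - 4 * ln 4 \<le> C_G (1/2 * ln y)"
    using C_G_ge \<open>0 \<le> ln y\<close> by simp
  then show "ln y \<le> c_thr K s k N1 N2 \<delta>"
    unfolding c_thr_def y_def[symmetric]
    using ln_4_le[OF assms(6)] ln_4_le[OF assms(7)] ln_4_bounds by linarith
qed

lemma c_thr_nonneg:
  assumes "2 \<le> K" "0 < \<delta>" "\<delta> \<le> 1" "1 < s" "1 \<le> k" "1 \<le> N1" "1 \<le> N2"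
  shows "0 \<le> c_thr K s k N1 N2 \<delta>"
  using ln_ge_zero[OF ln_le_c_thr(1)[OF assms]] ln_le_c_thr(2)[OF assms] by linarith

lemma exp_neg_c_thr_le:
  assumes "2 \<le> K" "0 < \<delta>" "\<delta> \<le> 1" "1 < s" "1 \<le> k" "1 \<le> N1" "1 \<le> N2"
  shows "exp (- c_thr K s k N1 N2 \<delta>) \<le> \<delta> / ((real K - 1) * (zeta_r s)\<^sup>2 * real k powr s)"
proof -
  define y where "y = (real K - 1) * (zeta_r s)\<^sup>2 * real k powr s / \<delta>"
  have "0 < y"
    using ln_le_c_thr(1)[OF assms] unfolding y_def[symmetric] by simp
  have "exp (- c_thr K s k N1 N2 \<delta>) \<le> exp (- ln y)"
    using ln_le_c_thr(2)[OF assms] unfolding y_def[symmetric] by simp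
  also have "\<dots> = \<delta> / ((real K - 1) * (zeta_r s)\<^sup>2 * real k powr s)"
    using \<open>0 < y\<close> by (simp add: exp_minus y_def)
  finally show ?thesis .
qed

section \<open>An exponential supermartingale\<close>

definition tilt :: "real \<Rightarrow> real \<Rightarrow> real \<Rightarrow> real" where
  "tilt l m x = l * (x - m) - l\<^sup>2 / 2"

lemma optimal_tilt_ge:
  fixes c v D :: real
  assumes "0 < v" "0 \<le> c" "sqrt (2 * c * v) \<le> D"
  shows "c \<le> sqrt (2 * c * v) / v * D - (sqrt (2 * c * v) / v)\<^sup>2 / 2 * v"
proof -
  define r where "r = sqrt (2 * c * v)"
  have "0 \<le> r / v"
    unfolding r_def using assms(1,2) by (simp add: divide_nonneg_pos)
  have "c = r\<^sup>2 / (2 * v)"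
    unfolding r_def using assms(1,2) by simp
  also have "\<dots> = r / v * r - (r / v)\<^sup>2 / 2 * v"
    using assms(1) by (simp add: field_simps power2_eq_square)
  also have "\<dots> \<le> r / v * D - (r / v)\<^sup>2 / 2 * v"
    using mult_left_mono[OF assms(3) \<open>0 \<le> r / v\<close>] unfolding r_def by simp
  finally show ?thesis
    unfolding r_def .
qed

lemma sum_tilt_window:
  assumes "card W = N" "0 < N"
  shows "(\<Sum>t\<in>W. tilt (\<theta> / real N) m (x t)) = \<theta> * ((\<Sum>t\<in>W. x t) / real N - m) - \<theta>\<^sup>2 / (2 * real N)"
proof -
  have "(\<Sum>t\<in>W. tilt (\<theta> / real N) m (x t)) =
      (\<Sum>t\<in>W. \<theta> / real N * x t - (\<theta> / real N * m + (\<theta> / real N)\<^sup>2 / 2))"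
    by (simp add: tilt_def right_diff_distrib diff_diff_eq)
  also have "\<dots> = \<theta> / real N * (\<Sum>t\<in>W. x t) - real N * (\<theta> / real N * m + (\<theta> / real N)\<^sup>2 / 2)"
    using assms(1) by (simp add: sum_subtractf sum_distrib_left)
  finally show ?thesis
    using assms(2) by (simp add: field_simps power2_eq_square)
qed

lemma sum_tilt_two_windows:
  fixes \<theta> :: real
  assumes "a \<noteq> b" "l1 < h1" "l2 < h2" "h1 \<le> cnt i n b" "h2 \<le> cnt i n a"
  defines "L \<equiv> \<lambda>a' j. if a' = b \<and> l1 \<le> j \<and> j < h1 then \<theta> / real (h1 - l1)
      else if a' = a \<and> l2 \<le> j \<and> j < h2 then - \<theta> / real (h2 - l2) else 0"
  shows "(\<Sum>t\<in>{1..<n}. tilt (L (i t) (cnt i t (i t))) (\<mu> (i t)) (x t)) =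
    \<theta> * ((window_mean i x n b l1 h1 - \<mu> b) - (window_mean i x n a l2 h2 - \<mu> a))
      - \<theta>\<^sup>2 / 2 * (1 / real (h1 - l1) + 1 / real (h2 - l2))"
proof -
  let ?f = "\<lambda>t. tilt (L (i t) (cnt i t (i t))) (\<mu> (i t)) (x t)"
  let ?W1 = "sample_window i n b l1 h1" and ?W2 = "sample_window i n a l2 h2"
  have fin: "finite ?W1" "finite ?W2"
    unfolding sample_window_def by simp_all
  have "(\<Sum>t\<in>{1..<n}. ?f t) = (\<Sum>t\<in>?W1 \<union> ?W2. ?f t)"
    by (rule sum.mono_neutral_right) (auto simp: sample_window_def L_def tilt_def)
  also have "\<dots> = (\<Sum>t\<in>?W1. ?f t) + (\<Sum>t\<in>?W2. ?f t)"
    using assms(1) fin by (intro sum.union_disjoint) (auto simp: sample_window_def)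
  also have "(\<Sum>t\<in>?W1. ?f t) = (\<Sum>t\<in>?W1. tilt (\<theta> / real (h1 - l1)) (\<mu> b) (x t))"
    by (intro sum.cong) (auto simp: sample_window_def L_def)
  also have "(\<Sum>t\<in>?W2. ?f t) = (\<Sum>t\<in>?W2. tilt (- \<theta> / real (h2 - l2)) (\<mu> a) (x t))"
    using assms(1) by (intro sum.cong) (auto simp: sample_window_def L_def)
  also have "(\<Sum>t\<in>?W1. tilt (\<theta> / real (h1 - l1)) (\<mu> b) (x t)) =
      \<theta> * (window_mean i x n b l1 h1 - \<mu> b) - \<theta>\<^sup>2 / (2 * real (h1 - l1))"
    using sum_tilt_window[of ?W1 "h1 - l1" \<theta> "\<mu> b" x] card_full_sample_window[of l1 h1 i n b]
      assms(2,4)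
    by (simp add: window_mean_def)
  also have "(\<Sum>t\<in>?W2. tilt (- \<theta> / real (h2 - l2)) (\<mu> a) (x t)) =
      - \<theta> * (window_mean i x n a l2 h2 - \<mu> a) - (- \<theta>)\<^sup>2 / (2 * real (h2 - l2))"
    using sum_tilt_window[of ?W2 "h2 - l2" "- \<theta>" "\<mu> a" x] card_full_sample_window[of l2 h2 i n a]
      assms(3,5)
    by (simp add: window_mean_def)
  finally show ?thesis
    by (simp add: algebra_simps power2_eq_square)
qed

lemma (in prob_space) prob_UN_le_suminf:
  assumes "\<And>i. A i \<in> events" "\<And>i. prob (A i) \<le> f i" "summable f"
  shows "prob (\<Union>i. A i) \<le> suminf f"
proof -
  have "summable (\<lambda>i. prob (A i))"
    by (rule summable_comparison_test[OF _ assms(3)]) (use assms(2) in auto)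
  then have "prob (\<Union>i. A i) \<le> (\<Sum>i. prob (A i))"
    using assms(1) by (intro finite_measure_subadditive_countably) auto
  also have "\<dots> \<le> suminf f"
    using \<open>summable (\<lambda>i. prob (A i))\<close> assms by (intro suminf_le) auto
  finally show ?thesis .
qed

lemma (in prob_space) prob_UN_UN_le_zeta_r:
  assumes "1 < s" and "\<And>k1 k2. 1 \<le> k1 \<Longrightarrow> 1 \<le> k2 \<Longrightarrow> A k1 k2 \<in> events"
    and "\<And>k1 k2. 1 \<le> k1 \<Longrightarrow> 1 \<le> k2 \<Longrightarrow> prob (A k1 k2) \<le> C / real (k1 * k2) powr s"
  shows "prob (\<Union>k1\<in>{1..}. \<Union>k2\<in>{1..}. A k1 k2) \<le> C * (zeta_r s)\<^sup>2"
proof -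
  define p where "p n = 1 / real (Suc n) powr s" for n
  have p: "p sums zeta_r s"
    unfolding p_def zeta_r_def using summable_zeta_r[OF assms(1)] by (rule summable_sums)
  have "{1::nat..} = range Suc"
    by (auto simp: image_iff Suc_le_eq gr0_conv_Suc)
  then have "(\<Union>k1\<in>{1..}. \<Union>k2\<in>{1..}. A k1 k2) = (\<Union>n1. \<Union>n2. A (Suc n1) (Suc n2))"
    by simp
  also have "prob \<dots> \<le> (\<Sum>n1. C * zeta_r s * p n1)"
  proof (rule prob_UN_le_suminf)
    fix n1
    have "prob (A (Suc n1) (Suc n2)) \<le> C * p n1 * p n2" for n2
      using assms(3)[of "Suc n1" "Suc n2"] unfolding p_def of_nat_mult powr_mult by simp
    then have "prob (\<Union>n2. A (Suc n1) (Suc n2)) \<le> (\<Sum>n2. C * p n1 * p n2)"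
      using assms(2) sums_summable[OF sums_mult[OF p]] by (intro prob_UN_le_suminf) auto
    also have "\<dots> = C * zeta_r s * p n1"
      using sums_unique[OF sums_mult[OF p, of "C * p n1"]] by (simp add: ac_simps)
    finally show "prob (\<Union>n2. A (Suc n1) (Suc n2)) \<le> C * zeta_r s * p n1" .
  qed (use assms(2) sums_summable[OF sums_mult[OF p]] in auto)
  also have "\<dots> = C * (zeta_r s)\<^sup>2"
    using sums_unique[OF sums_mult[OF p, of "C * zeta_r s"]] by (simp add: power2_eq_square)
  finally show ?thesis .
qed

section \<open>The bandit model\<close>

locale bandit_model = prob_space M
  for M :: "'w measure" +
  fixes G :: "nat \<Rightarrow> 'w measure" and I :: "nat \<Rightarrow> 'w \<Rightarrow> nat" and X :: "nat \<Rightarrow> 'w \<Rightarrow> real"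
    and \<nu> :: "nat \<Rightarrow> real measure" and \<mu> :: "nat \<Rightarrow> real" and K :: nat
  assumes arms: "\<forall>a<K. prob_space (\<nu> a) \<and> sets (\<nu> a) = sets borel \<and> subgaussian1 (\<nu> a)
                  \<and> \<mu> a = (\<integral>x. x \<partial>\<nu> a)"
    and filt: "\<forall>n. subalgebra M (G n)" "\<forall>n. sets (G n) \<subseteq> sets (G (Suc n))"
    and adapted: "\<forall>n\<ge>1. I n \<in> measurable (G n) (count_space UNIV)"
                 "\<forall>n\<ge>1. X n \<in> borel_measurable (G (Suc n))"
    and range: "\<forall>n\<ge>1. \<forall>\<omega>\<in>space M. I n \<omega> < K"
    and init: "\<forall>\<omega>\<in>space M. bij_betw (\<lambda>t. I t \<omega>) {1..K} {..<K}"
    and obs: "\<forall>n\<ge>1. \<forall>A\<in>sets (G n). \<forall>B\<in>sets borel. \<forall>a<K.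
               measure M (A \<inter> {\<omega>\<in>space M. I n \<omega> = a \<and> X n \<omega> \<in> B})
                 = measure M (A \<inter> {\<omega>\<in>space M. I n \<omega> = a}) * measure (\<nu> a) B"
begin

abbreviation pulled :: "nat \<Rightarrow> nat \<Rightarrow> 'w set" where
  "pulled n a \<equiv> {\<omega>\<in>space M. I n \<omega> = a}"

lemma K_pos: "0 < K"
  using range not_empty by fastforce

lemma subalgebra_G: "subalgebra M (G n)"
  using filt(1) by blast

lemma measurable_G_mono:
  assumes "f \<in> measurable (G m) N" "m \<le> n"
  shows "f \<in> measurable (G n) N"
proof -
  have "sets (G m) \<subseteq> sets (G n)"
    using lift_Suc_mono_le[of "\<lambda>n. sets (G n)", OF _ assms(2)] filt(2) by blast
  then show ?thesis
    using assms(1) subalgebra_G[of m] subalgebra_G[of n] unfolding measurable_def subalgebra_def by auto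
qed

lemma measurable_I_G: "1 \<le> t \<Longrightarrow> t \<le> n \<Longrightarrow> I t \<in> measurable (G n) (count_space UNIV)"
  using adapted(1) measurable_G_mono by blast

lemma measurable_X_G: "1 \<le> t \<Longrightarrow> t < n \<Longrightarrow> X t \<in> borel_measurable (G n)"
  using adapted(2) measurable_G_mono[of "X t" "Suc t"] by simp

lemma measurable_cnt_G: "(\<lambda>\<omega>. cnt (\<lambda>u. I u \<omega>) n a) \<in> measurable (G n) (count_space UNIV)"
  by (rule measurable_cnt) (simp add: measurable_I_G)

lemma measurable_I: "1 \<le> t \<Longrightarrow> I t \<in> measurable M (count_space UNIV)"
  using adapted(1) measurable_from_subalg[OF subalgebra_G] by blast

lemma measurable_X: "1 \<le> t \<Longrightarrow> X t \<in> borel_measurable M"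
  using adapted(2) measurable_from_subalg[OF subalgebra_G] by blast

lemma sets_pulled [measurable]: "1 \<le> n \<Longrightarrow> pulled n a \<in> sets M"
  using measurable_I[of n] by measurable

lemma distr_reward_pulled:
  assumes "1 \<le> n" "A \<in> sets (G n)" "a < K"
  shows "distr (density M (indicator (A \<inter> pulled n a))) borel (X n) =
    scale_measure (emeasure M (A \<inter> pulled n a)) (\<nu> a)"
proof (rule measure_eqI)
  interpret arm: prob_space "\<nu> a"
    using arms assms(3) by blast
  have [measurable]: "X n \<in> borel_measurable M" "A \<in> sets M"
    using measurable_X assms(1,2) subalgebra_G unfolding subalgebra_def by auto
  have E: "A \<inter> pulled n a \<in> sets M"
    using assms(1) by measurable
  show "sets (distr (density M (indicator (A \<inter> pulled n a))) borel (X n)) =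
      sets (scale_measure (emeasure M (A \<inter> pulled n a)) (\<nu> a))"
    using arms assms(3) by simp
  fix B assume "B \<in> sets (distr (density M (indicator (A \<inter> pulled n a))) borel (X n))"
  then have [measurable]: "B \<in> sets borel"
    by simp
  have "emeasure (distr (density M (indicator (A \<inter> pulled n a))) borel (X n)) B =
      emeasure M (A \<inter> {\<omega>\<in>space M. I n \<omega> = a \<and> X n \<omega> \<in> B})"
    using E by (subst emeasure_distr)
      (auto simp: emeasure_restricted intro!: arg_cong[where f = "emeasure M"])
  also have "\<dots> = ennreal (measure M (A \<inter> pulled n a) * measure (\<nu> a) B)"
    using obs assms by (simp add: emeasure_eq_measure)
  also have "\<dots> = emeasure (scale_measure (emeasure M (A \<inter> pulled n a)) (\<nu> a)) B"
    by (simp add: emeasure_eq_measure arm.emeasure_eq_measure ennreal_mult)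
  finally show "emeasure (distr (density M (indicator (A \<inter> pulled n a))) borel (X n)) B =
      emeasure (scale_measure (emeasure M (A \<inter> pulled n a)) (\<nu> a)) B" .
qed

lemma nn_integral_pulled_indicator:
  assumes "1 \<le> n" "A \<in> sets (G n)" "a < K" and [measurable]: "h \<in> borel_measurable borel"
  shows "(\<integral>\<^sup>+\<omega>. indicator (A \<inter> pulled n a) \<omega> * h (X n \<omega>) \<partial>M) =
    emeasure M (A \<inter> pulled n a) * (\<integral>\<^sup>+x. h x \<partial>\<nu> a)"
proof -
  have [measurable]: "X n \<in> borel_measurable M" "A \<in> sets M"
    using measurable_X assms(1,2) subalgebra_G unfolding subalgebra_def by auto
  have [measurable]: "A \<inter> pulled n a \<in> sets M"
    using assms(1) by measurable
  have "(\<integral>\<^sup>+\<omega>. indicator (A \<inter> pulled n a) \<omega> * h (X n \<omega>) \<partial>M) =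
      (\<integral>\<^sup>+\<omega>. h (X n \<omega>) \<partial>density M (indicator (A \<inter> pulled n a)))"
    by (rule nn_integral_density[symmetric]) measurable
  also have "\<dots> = (\<integral>\<^sup>+x. h x \<partial>distr (density M (indicator (A \<inter> pulled n a))) borel (X n))"
    by (rule nn_integral_distr[symmetric]) measurable
  also have "\<dots> = emeasure M (A \<inter> pulled n a) * (\<integral>\<^sup>+x. h x \<partial>\<nu> a)"
    unfolding distr_reward_pulled[OF assms(1-3)]
  proof (rule nn_integral_scale_measure)
    have "sets (\<nu> a) = sets borel"
      using arms assms(3) by blast
    then show "h \<in> borel_measurable (\<nu> a)"
      using measurable_cong_sets[of "\<nu> a" borel borel borel] by simp
  qed
  finally show ?thesis .
qed

text \<open>Extending the previous lemma from indicators of past events to all past-measurable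
  \<open>Z\<close> amounts to an equality of two measures on \<open>G n\<close>.\<close>
lemma nn_integral_pulled_reward:
  assumes "1 \<le> n" "Z \<in> borel_measurable (G n)" "a < K" and [measurable]: "h \<in> borel_measurable borel"
  shows "(\<integral>\<^sup>+\<omega>. Z \<omega> * indicator (pulled n a) \<omega> * h (X n \<omega>) \<partial>M) =
    (\<integral>\<^sup>+\<omega>. Z \<omega> * indicator (pulled n a) \<omega> \<partial>M) * (\<integral>\<^sup>+x. h x \<partial>\<nu> a)"
proof -
  define J where "J = (\<integral>\<^sup>+x. h x \<partial>\<nu> a)"
  define g where "g \<omega> = indicator (pulled n a) \<omega> * h (X n \<omega>)" for \<omega>
  have [measurable]: "X n \<in> borel_measurable M" "Z \<in> borel_measurable M"
    using measurable_X assms(1,2) measurable_from_subalg[OF subalgebra_G] by auto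
  have [measurable]: "g \<in> borel_measurable M"
    unfolding g_def using assms(1) by measurable
  have sub: "subalgebra (density M f) (G n)" for f
    using subalgebra_G[of n] by (simp add: subalgebra_def)
  have "restr_to_subalg (density M g) (G n) =
      scale_measure J (restr_to_subalg (density M (indicator (pulled n a))) (G n))"
  proof (rule measure_eqI)
    fix A assume "A \<in> sets (restr_to_subalg (density M g) (G n))"
    then have A: "A \<in> sets (G n)"
      using sets_restr_to_subalg[OF sub] by simp
    then have [measurable]: "A \<in> sets M"
      using subalgebra_G unfolding subalgebra_def by auto
    have "emeasure (density M g) A = (\<integral>\<^sup>+\<omega>. indicator (A \<inter> pulled n a) \<omega> * h (X n \<omega>) \<partial>M)"
      by (subst emeasure_density) (auto simp: g_def indicator_def intro!: nn_integral_cong)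
    also have "\<dots> = J * emeasure M (pulled n a \<inter> A)"
      unfolding J_def nn_integral_pulled_indicator[OF assms(1) A assms(3,4)]
      by (simp add: Int_commute mult.commute)
    finally show "emeasure (restr_to_subalg (density M g) (G n)) A =
        emeasure (scale_measure J (restr_to_subalg (density M (indicator (pulled n a))) (G n))) A"
      using assms(1) by (simp add: emeasure_restr_to_subalg[OF sub A] emeasure_restricted)
  qed (simp add: sets_restr_to_subalg[OF sub])
  then have "(\<integral>\<^sup>+\<omega>. Z \<omega> \<partial>restr_to_subalg (density M g) (G n)) =
      J * (\<integral>\<^sup>+\<omega>. Z \<omega> \<partial>restr_to_subalg (density M (indicator (pulled n a))) (G n))"
    using nn_integral_scale_measure[OF measurable_in_subalg[OF sub assms(2)]] by simp
  then show ?thesis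
    using assms(1,2)
    by (simp add: nn_integral_subalgebra2[OF sub] nn_integral_density g_def J_def ac_simps)
qed


lemma nn_integral_exp_tilt_le_1:
  assumes "a < K"
  shows "(\<integral>\<^sup>+x. ennreal (exp (tilt l (\<mu> a) x)) \<partial>\<nu> a) \<le> 1"
proof -
  interpret arm: prob_space "\<nu> a"
    using arms assms by blast
  have "integrable (\<nu> a) (\<lambda>x. exp (l * (x - \<mu> a)))" "(\<integral>x. exp (l * (x - \<mu> a)) \<partial>\<nu> a) \<le> exp (l\<^sup>2 / 2)"
    using arms assms unfolding subgaussian1_def by auto
  moreover have "exp (tilt l (\<mu> a) x) = exp (l * (x - \<mu> a)) / exp (l\<^sup>2 / 2)" for x
    by (simp add: tilt_def exp_diff)
  ultimately show ?thesis
    by (simp add: nn_integral_eq_integral)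
qed

text \<open>\<open>L a j\<close> is the weight given to the sample number \<open>j\<close> (from \<open>0\<close>) of arm \<open>a\<close>; the
  weight used at round \<open>t\<close> is therefore known before \<open>X t\<close> is observed.\<close>
definition exp_process :: "(nat \<Rightarrow> nat \<Rightarrow> real) \<Rightarrow> nat \<Rightarrow> 'w \<Rightarrow> ennreal" where
  "exp_process L n \<omega> = ennreal (exp (\<Sum>t\<in>{1..<n}.
     tilt (L (I t \<omega>) (cnt (\<lambda>u. I u \<omega>) t (I t \<omega>))) (\<mu> (I t \<omega>)) (X t \<omega>)))"

lemma exp_process_measurable: "exp_process L n \<in> borel_measurable (G n)"
proof -
  have "(\<lambda>\<omega>. tilt (L (I t \<omega>) (cnt (\<lambda>u. I u \<omega>) t (I t \<omega>))) (\<mu> (I t \<omega>)) (X t \<omega>)) \<in> borel_measurable (G n)"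
    if "t \<in> {1..<n}" for t
  proof -
    have [measurable]: "I t \<in> measurable (G n) (count_space UNIV)" "X t \<in> borel_measurable (G n)"
      "(\<lambda>\<omega>. cnt (\<lambda>u. I u \<omega>) t a) \<in> measurable (G n) (count_space UNIV)" for a
      using that measurable_I_G measurable_X_G measurable_G_mono[OF measurable_cnt_G] by auto
    show ?thesis
      unfolding tilt_def by measurable
  qed
  then have "(\<lambda>\<omega>. \<Sum>t\<in>{1..<n}. tilt (L (I t \<omega>) (cnt (\<lambda>u. I u \<omega>) t (I t \<omega>))) (\<mu> (I t \<omega>)) (X t \<omega>))
      \<in> borel_measurable (G n)"
    by (rule borel_measurable_sum)
  then show ?thesis
    unfolding exp_process_def by measurable
qed

lemma exp_process_Suc:
  assumes "1 \<le> n"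
  shows "exp_process L (Suc n) \<omega> =
    exp_process L n \<omega> * ennreal (exp (tilt (L (I n \<omega>) (cnt (\<lambda>u. I u \<omega>) n (I n \<omega>))) (\<mu> (I n \<omega>)) (X n \<omega>)))"
proof -
  have "{1..<Suc n} = insert n {1..<n}"
    using assms by auto
  then show ?thesis
    unfolding exp_process_def by (simp add: exp_add ennreal_mult[symmetric] add.commute)
qed

lemma sum_pull_count_indicator:
  fixes F :: "nat \<Rightarrow> nat \<Rightarrow> ennreal"
  assumes "1 \<le> n" "\<omega> \<in> space M"
  shows "(\<Sum>(a, j)\<in>{..<K} \<times> {..n}. indicator {\<omega>\<in>space M. cnt (\<lambda>u. I u \<omega>) n a = j} \<omega> *
      indicator (pulled n a) \<omega> * F a j) = F (I n \<omega>) (cnt (\<lambda>u. I u \<omega>) n (I n \<omega>))"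
proof -
  have "(I n \<omega>, cnt (\<lambda>u. I u \<omega>) n (I n \<omega>)) \<in> {..<K} \<times> {..n}"
    using range assms cnt_le by auto
  moreover have "(\<Sum>(a, j)\<in>{..<K} \<times> {..n}. indicator {\<omega>\<in>space M. cnt (\<lambda>u. I u \<omega>) n a = j} \<omega> *
      indicator (pulled n a) \<omega> * F a j) =
    (\<Sum>p\<in>{..<K} \<times> {..n}. if (I n \<omega>, cnt (\<lambda>u. I u \<omega>) n (I n \<omega>)) = p then F (fst p) (snd p) else 0)"
    using assms(2) by (intro sum.cong refl) (auto simp: indicator_def)
  ultimately show ?thesis
    by simp
qed

lemma nn_integral_pulled_exp_tilt_le:
  assumes "1 \<le> n" "Z \<in> borel_measurable (G n)" "a < K"
  shows "(\<integral>\<^sup>+\<omega>. Z \<omega> * indicator (pulled n a) \<omega> * ennreal (exp (tilt l (\<mu> a) (X n \<omega>))) \<partial>M) \<le>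
    (\<integral>\<^sup>+\<omega>. Z \<omega> * indicator (pulled n a) \<omega> \<partial>M)"
proof -
  have "(\<lambda>x. ennreal (exp (tilt l (\<mu> a) x))) \<in> borel_measurable borel"
    unfolding tilt_def by measurable
  then have "(\<integral>\<^sup>+\<omega>. Z \<omega> * indicator (pulled n a) \<omega> * ennreal (exp (tilt l (\<mu> a) (X n \<omega>))) \<partial>M) =
      (\<integral>\<^sup>+\<omega>. Z \<omega> * indicator (pulled n a) \<omega> \<partial>M) * (\<integral>\<^sup>+x. ennreal (exp (tilt l (\<mu> a) x)) \<partial>\<nu> a)"
    using assms by (intro nn_integral_pulled_reward)
  also have "\<dots> \<le> (\<integral>\<^sup>+\<omega>. Z \<omega> * indicator (pulled n a) \<omega> \<partial>M)"
    using nn_integral_exp_tilt_le_1[OF assms(3)] by (intro mult_left_le) auto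
  finally show ?thesis .
qed

lemma nn_integral_exp_process_Suc_le:
  assumes "1 \<le> n"
  shows "(\<integral>\<^sup>+\<omega>. exp_process L (Suc n) \<omega> \<partial>M) \<le> (\<integral>\<^sup>+\<omega>. exp_process L n \<omega> \<partial>M)"
proof -
  define g where "g a j x = ennreal (exp (tilt (L a j) (\<mu> a) x))" for a j x
  define Z where "Z a j \<omega> = exp_process L n \<omega> * indicator {\<omega>\<in>space M. cnt (\<lambda>u. I u \<omega>) n a = j} \<omega>"
    for a j \<omega>
  let ?S = "{..<K} \<times> {..n}"
  have [measurable]: "I n \<in> measurable M (count_space UNIV)" "X n \<in> borel_measurable M"
    using measurable_I measurable_X assms by auto
  have [measurable]: "g a j \<in> borel_measurable borel" for a j
    unfolding g_def tilt_def by measurable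
  have ZG: "Z a j \<in> borel_measurable (G n)" for a j
  proof -
    have [measurable]: "exp_process L n \<in> borel_measurable (G n)"
      "(\<lambda>\<omega>. cnt (\<lambda>u. I u \<omega>) n a) \<in> measurable (G n) (count_space UNIV)"
      by (rule exp_process_measurable measurable_cnt_G)+
    have "{\<omega>\<in>space M. cnt (\<lambda>u. I u \<omega>) n a = j} = {\<omega>\<in>space (G n). cnt (\<lambda>u. I u \<omega>) n a = j}"
      using subalgebra_G unfolding subalgebra_def by simp
    then show ?thesis
      unfolding Z_def by simp measurable
  qed
  then have [measurable]: "Z a j \<in> borel_measurable M" for a j
    using measurable_from_subalg[OF subalgebra_G] by blast
  have "(\<integral>\<^sup>+\<omega>. exp_process L (Suc n) \<omega> \<partial>M) =
      (\<integral>\<^sup>+\<omega>. (\<Sum>(a, j)\<in>?S. Z a j \<omega> * indicator (pulled n a) \<omega> * g a j (X n \<omega>)) \<partial>M)"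
    using sum_pull_count_indicator[OF assms, where F = "\<lambda>a j. exp_process L n _ * g a j (X n _)"]
    by (intro nn_integral_cong) (simp add: exp_process_Suc[OF assms] Z_def g_def ac_simps)
  also have "\<dots> = (\<Sum>(a, j)\<in>?S. \<integral>\<^sup>+\<omega>. Z a j \<omega> * indicator (pulled n a) \<omega> * g a j (X n \<omega>) \<partial>M)"
    using assms by (subst nn_integral_sum) (auto simp: case_prod_beta)
  also have "\<dots> \<le> (\<Sum>(a, j)\<in>?S. \<integral>\<^sup>+\<omega>. Z a j \<omega> * indicator (pulled n a) \<omega> \<partial>M)"
    using nn_integral_pulled_exp_tilt_le[OF assms ZG] unfolding g_def
    by (intro sum_mono) (auto simp: split_beta)
  also have "\<dots> = (\<integral>\<^sup>+\<omega>. (\<Sum>(a, j)\<in>?S. Z a j \<omega> * indicator (pulled n a) \<omega>) \<partial>M)"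
    using assms by (subst nn_integral_sum) (auto simp: case_prod_beta)
  also have "\<dots> = (\<integral>\<^sup>+\<omega>. exp_process L n \<omega> \<partial>M)"
    using sum_pull_count_indicator[OF assms, where F = "\<lambda>a j. exp_process L n _"]
    by (intro nn_integral_cong) (simp add: Z_def ac_simps)
  finally show ?thesis .
qed

lemma nn_integral_exp_process_le_1: "(\<integral>\<^sup>+\<omega>. exp_process L n \<omega> \<partial>M) \<le> 1"
proof (induction n)
  case (Suc n)
  show ?case
  proof (cases "n = 0")
    case True
    then show ?thesis
      by (simp add: exp_process_def emeasure_space_1)
  qed (use Suc nn_integral_exp_process_Suc_le[of n L] in auto)
qed (simp add: exp_process_def emeasure_space_1)


definition window_gap_at :: "nat \<Rightarrow> nat \<Rightarrow> nat \<Rightarrow> nat \<Rightarrow> nat \<Rightarrow> nat \<Rightarrow> real \<Rightarrow> nat \<Rightarrow> 'w set" where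
  "window_gap_at b l1 h1 a l2 h2 c n = {\<omega>\<in>space M.
     h1 \<le> cnt (\<lambda>t. I t \<omega>) n b \<and> h2 \<le> cnt (\<lambda>t. I t \<omega>) n a \<and>
     sqrt (2 * c * (1 / real (h1 - l1) + 1 / real (h2 - l2))) \<le>
       (window_mean (\<lambda>t. I t \<omega>) (\<lambda>t. X t \<omega>) n b l1 h1 - \<mu> b)
       - (window_mean (\<lambda>t. I t \<omega>) (\<lambda>t. X t \<omega>) n a l2 h2 - \<mu> a)}"

definition window_gap_event :: "nat \<Rightarrow> nat \<Rightarrow> nat \<Rightarrow> nat \<Rightarrow> nat \<Rightarrow> nat \<Rightarrow> real \<Rightarrow> 'w set" where
  "window_gap_event b l1 h1 a l2 h2 c = (\<Union>n. window_gap_at b l1 h1 a l2 h2 c n)"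

lemma measurable_cnt_trajectory [measurable]:
  "(\<lambda>\<omega>. cnt (\<lambda>t. I t \<omega>) n a) \<in> measurable M (count_space UNIV)"
  using measurable_I by (intro measurable_cnt) auto

lemma borel_measurable_window_mean_trajectory [measurable]:
  "(\<lambda>\<omega>. window_mean (\<lambda>t. I t \<omega>) (\<lambda>t. X t \<omega>) n a l h) \<in> borel_measurable M"
  using measurable_I measurable_X by (intro borel_measurable_window_mean) auto

lemma sets_window_gap_at [measurable]: "window_gap_at b l1 h1 a l2 h2 c n \<in> events"
  unfolding window_gap_at_def by measurable

lemma sets_window_gap_event [measurable]: "window_gap_event b l1 h1 a l2 h2 c \<in> events"
  unfolding window_gap_event_def by measurable

text \<open>Once both windows are full their means no longer change.\<close>
lemma incseq_window_gap_at: "incseq (window_gap_at b l1 h1 a l2 h2 c)"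
proof (rule incseq_SucI, rule subsetI)
  fix n \<omega> assume "\<omega> \<in> window_gap_at b l1 h1 a l2 h2 c n"
  moreover have "window_mean i x (Suc n) a' l h = window_mean i x n a' l h" if "h \<le> cnt i n a'"
    for i x a' l h
    using that by (simp add: window_mean_def sample_window_Suc)
  ultimately show "\<omega> \<in> window_gap_at b l1 h1 a l2 h2 c (Suc n)"
    unfolding window_gap_at_def using cnt_mono[of n "Suc n" "\<lambda>t. I t \<omega>"] by (auto intro: order_trans)
qed

text \<open>Markov's inequality for the exponential process whose weights are \<open>\<theta>/N\<^sub>1\<close> on the first
  window and \<open>-\<theta>/N\<^sub>2\<close> on the second, with \<open>\<theta>\<close> optimised.\<close>
lemma prob_window_gap_at_le:
  assumes "a \<noteq> b" "l1 < h1" "l2 < h2" "0 \<le> c"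
  shows "prob (window_gap_at b l1 h1 a l2 h2 c n) \<le> exp (- c)"
proof -
  define v where "v = 1 / real (h1 - l1) + 1 / real (h2 - l2)"
  define \<theta> where "\<theta> = sqrt (2 * c * v) / v"
  define L where "L = (\<lambda>a' j. if a' = b \<and> l1 \<le> j \<and> j < h1 then \<theta> / real (h1 - l1)
      else if a' = a \<and> l2 \<le> j \<and> j < h2 then - \<theta> / real (h2 - l2) else 0)"
  define D where "D \<omega> = (window_mean (\<lambda>t. I t \<omega>) (\<lambda>t. X t \<omega>) n b l1 h1 - \<mu> b)
      - (window_mean (\<lambda>t. I t \<omega>) (\<lambda>t. X t \<omega>) n a l2 h2 - \<mu> a)" for \<omega>
  let ?F = "window_gap_at b l1 h1 a l2 h2 c n"
  have "0 < v"
    unfolding v_def using assms(2,3) by (simp add: add_pos_pos)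
  have "ennreal (exp c) * indicator ?F \<omega> \<le> exp_process L n \<omega>" for \<omega>
  proof (cases "\<omega> \<in> ?F")
    case True
    then have "h1 \<le> cnt (\<lambda>t. I t \<omega>) n b" "h2 \<le> cnt (\<lambda>t. I t \<omega>) n a" "sqrt (2 * c * v) \<le> D \<omega>"
      unfolding window_gap_at_def D_def v_def by auto
    then have "c \<le> \<theta> * D \<omega> - \<theta>\<^sup>2 / 2 * v"
      unfolding \<theta>_def using optimal_tilt_ge[OF \<open>0 < v\<close> assms(4)] by blast
    also have "\<dots> = (\<Sum>t\<in>{1..<n}. tilt (L (I t \<omega>) (cnt (\<lambda>u. I u \<omega>) t (I t \<omega>))) (\<mu> (I t \<omega>)) (X t \<omega>))"
      unfolding D_def v_def L_def
      by (rule sum_tilt_two_windows[symmetric, OF assms(1-3) \<open>h1 \<le> _\<close> \<open>h2 \<le> _\<close>])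
    finally show ?thesis
      using True by (simp add: exp_process_def ennreal_leI)
  qed simp
  then have "(\<integral>\<^sup>+\<omega>. ennreal (exp c) * indicator ?F \<omega> \<partial>M) \<le> (\<integral>\<^sup>+\<omega>. exp_process L n \<omega> \<partial>M)"
    by (rule nn_integral_mono)
  also have "\<dots> \<le> 1"
    by (rule nn_integral_exp_process_le_1)
  finally have "ennreal (exp c * prob ?F) \<le> 1"
    by (simp add: nn_integral_cmult_indicator emeasure_eq_measure ennreal_mult)
  then have "exp c * prob ?F \<le> 1"
    by simp
  then show ?thesis
    by (simp add: exp_minus field_simps)
qed

lemma prob_window_gap_event_le:
  assumes "a \<noteq> b" "l1 < h1" "l2 < h2" "0 \<le> c"
  shows "prob (window_gap_event b l1 h1 a l2 h2 c) \<le> exp (- c)"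
proof -
  have "(\<lambda>n. prob (window_gap_at b l1 h1 a l2 h2 c n)) \<longlonglongrightarrow> prob (window_gap_event b l1 h1 a l2 h2 c)"
    unfolding window_gap_event_def using incseq_window_gap_at by (intro finite_Lim_measure_incseq) auto
  then show ?thesis
    using prob_window_gap_at_le[OF assms] by (intro LIMSEQ_le_const2) auto
qed

definition phase_gap_event :: "real \<Rightarrow> real \<Rightarrow> nat \<Rightarrow> nat \<Rightarrow> nat \<Rightarrow> nat \<Rightarrow> 'w set" where
  "phase_gap_event s \<delta> b a k1 k2 =
     window_gap_event b (phase_lo k1) (phase_hi k1) a (phase_lo k2) (phase_hi k2)
       (c_thr K s (k1 * k2) (phase_len k1) (phase_len k2) \<delta>)"

lemma sets_phase_gap_event [measurable]: "phase_gap_event s \<delta> b a k1 k2 \<in> events"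
  unfolding phase_gap_event_def by measurable

lemma prob_phase_gap_event_le:
  assumes "a < K" "b < K" "a \<noteq> b" "0 < \<delta>" "\<delta> \<le> 1" "1 < s" "1 \<le> k1" "1 \<le> k2"
  shows "prob (phase_gap_event s \<delta> b a k1 k2) \<le>
    \<delta> / ((real K - 1) * (zeta_r s)\<^sup>2 * real (k1 * k2) powr s)"
proof -
  have K: "2 \<le> K"
    using assms(1-3) by linarith
  have N: "1 \<le> k1 * k2" "1 \<le> phase_len k1" "1 \<le> phase_len k2"
    using assms(7,8) phase_len_pos by (simp_all add: Suc_le_eq)
  have "prob (phase_gap_event s \<delta> b a k1 k2) \<le>
      exp (- c_thr K s (k1 * k2) (phase_len k1) (phase_len k2) \<delta>)"
    using c_thr_nonneg[OF K assms(4-6) N] assms(3) unfolding phase_gap_event_def phase_len_def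
    by (intro prob_window_gap_event_le phase_lo_less_hi) auto
  also have "\<dots> \<le> \<delta> / ((real K - 1) * (zeta_r s)\<^sup>2 * real (k1 * k2) powr s)"
    by (rule exp_neg_c_thr_le[OF K assms(4-6) N])
  finally show ?thesis .
qed

lemma prob_UN_phase_gap_event_le:
  assumes "a < K" "b < K" "a \<noteq> b" "0 < \<delta>" "\<delta> \<le> 1" "1 < s"
  shows "prob (\<Union>k1\<in>{1..}. \<Union>k2\<in>{1..}. phase_gap_event s \<delta> b a k1 k2) \<le> \<delta> / (real K - 1)"
proof -
  have "prob (\<Union>k1\<in>{1..}. \<Union>k2\<in>{1..}. phase_gap_event s \<delta> b a k1 k2) \<le>
      \<delta> / ((real K - 1) * (zeta_r s)\<^sup>2) * (zeta_r s)\<^sup>2"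
    using prob_phase_gap_event_le[OF assms]
    by (intro prob_UN_UN_le_zeta_r[OF assms(6)] sets_phase_gap_event) simp
  also have "\<dots> = \<delta> / (real K - 1)"
    using zeta_r_ge_1[OF assms(6)] by simp
  finally show ?thesis .
qed

lemma stops_wrong_subset:
  assumes "astar < K" "\<forall>b<K. b \<noteq> astar \<longrightarrow> \<mu> b < \<mu> astar"
  shows "{\<omega>\<in>space M. stops_wrong K s \<delta> astar (\<lambda>t. I t \<omega>) (\<lambda>t. X t \<omega>)} \<subseteq>
    (\<Union>b\<in>{..<K} - {astar}. \<Union>k1\<in>{1..}. \<Union>k2\<in>{1..}. phase_gap_event s \<delta> b astar k1 k2)"
proof
  fix \<omega> assume \<omega>: "\<omega> \<in> {\<omega>\<in>space M. stops_wrong K s \<delta> astar (\<lambda>t. I t \<omega>) (\<lambda>t. X t \<omega>)}"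
  then have "bij_betw (\<lambda>t. I t \<omega>) {1..K} {..<K}" "stops_wrong K s \<delta> astar (\<lambda>t. I t \<omega>) (\<lambda>t. X t \<omega>)"
    using init by auto
  then obtain b n k1 k2 where "b < K" "b \<noteq> astar" "1 \<le> k1" "1 \<le> k2"
    "phase_hi k1 \<le> cnt (\<lambda>t. I t \<omega>) n b" "phase_hi k2 \<le> cnt (\<lambda>t. I t \<omega>) n astar"
    "sqrt (2 * c_thr K s (k1 * k2) (phase_len k1) (phase_len k2) \<delta> *
        (1 / real (phase_len k1) + 1 / real (phase_len k2)))
      \<le> (window_mean (\<lambda>t. I t \<omega>) (\<lambda>t. X t \<omega>) n b (phase_lo k1) (phase_hi k1) - \<mu> b)
        - (window_mean (\<lambda>t. I t \<omega>) (\<lambda>t. X t \<omega>) n astar (phase_lo k2) (phase_hi k2) - \<mu> astar)"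
    by (rule wrong_stop_phase_gap[OF _ assms]) blast
  moreover from this \<omega> have "\<omega> \<in> phase_gap_event s \<delta> b astar k1 k2"
    unfolding phase_gap_event_def window_gap_event_def window_gap_at_def phase_len_def by blast
  ultimately show "\<omega> \<in> (\<Union>b\<in>{..<K} - {astar}. \<Union>k1\<in>{1..}. \<Union>k2\<in>{1..}. phase_gap_event s \<delta> b astar k1 k2)"
    by blast
qed

end

theorem lemma4:
  fixes M :: "'w measure" and G :: "nat \<Rightarrow> 'w measure"
    and I :: "nat \<Rightarrow> 'w \<Rightarrow> nat" and X :: "nat \<Rightarrow> 'w \<Rightarrow> real"
    and \<nu> :: "nat \<Rightarrow> real measure" and \<mu> :: "nat \<Rightarrow> real"
    and K astar :: nat and \<delta> s :: real
  assumes "prob_space M"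
    and "0 < \<delta>" and "\<delta> < 1" and "1 < s"
    and arms: "\<forall>a<K. prob_space (\<nu> a) \<and> sets (\<nu> a) = sets borel \<and> subgaussian1 (\<nu> a)
                  \<and> \<mu> a = (\<integral>x. x \<partial>\<nu> a)"
    and best: "astar < K" "\<forall>b<K. b \<noteq> astar \<longrightarrow> \<mu> b < \<mu> astar"
    and filt: "\<forall>n. subalgebra M (G n)" "\<forall>n. sets (G n) \<subseteq> sets (G (Suc n))"
    and adapted: "\<forall>n\<ge>1. I n \<in> measurable (G n) (count_space UNIV)"
                 "\<forall>n\<ge>1. X n \<in> borel_measurable (G (Suc n))"
    and range: "\<forall>n\<ge>1. \<forall>\<omega>\<in>space M. I n \<omega> < K"
    and init: "\<forall>\<omega>\<in>space M. bij_betw (\<lambda>t. I t \<omega>) {1..K} {..<K}"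
    and obs: "\<forall>n\<ge>1. \<forall>A\<in>sets (G n). \<forall>B\<in>sets borel. \<forall>a<K.
               measure M (A \<inter> {\<omega>\<in>space M. I n \<omega> = a \<and> X n \<omega> \<in> B})
                 = measure M (A \<inter> {\<omega>\<in>space M. I n \<omega> = a}) * measure (\<nu> a) B"
  shows "{\<omega>\<in>space M. stops_wrong K s \<delta> astar (\<lambda>n. I n \<omega>) (\<lambda>n. X n \<omega>)} \<in> sets M
       \<and> measure M {\<omega>\<in>space M. stops_wrong K s \<delta> astar (\<lambda>n. I n \<omega>) (\<lambda>n. X n \<omega>)} \<le> \<delta>"
proof -
  interpret bandit_model M G I X \<nu> \<mu> K
    using assms by (intro bandit_model.intro bandit_model_axioms.intro) auto
  let ?W = "{\<omega>\<in>space M. stops_wrong K s \<delta> astar (\<lambda>n. I n \<omega>) (\<lambda>n. X n \<omega>)}"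
  let ?U = "\<lambda>b. \<Union>k1\<in>{1..}. \<Union>k2\<in>{1..}. phase_gap_event s \<delta> b astar k1 k2"
  have U_sets: "?U b \<in> events" for b
    by measurable
  have U_le: "prob (?U b) \<le> \<delta> / (real K - 1)" if "b \<in> {..<K} - {astar}" for b
    using that assms(2-4) best(1) by (intro prob_UN_phase_gap_event_le) auto
  have "?W \<in> events"
    using sets_stops_wrong[OF measurable_I measurable_X init K_pos] .
  have "prob ?W \<le> prob (\<Union>b\<in>{..<K} - {astar}. ?U b)"
    using stops_wrong_subset[OF best] U_sets by (intro finite_measure_mono) auto
  also have "\<dots> \<le> (\<Sum>b\<in>{..<K} - {astar}. prob (?U b))"
    using U_sets by (intro finite_measure_subadditive_finite) auto
  also have "\<dots> \<le> (\<Sum>b\<in>{..<K} - {astar}. \<delta> / (real K - 1))"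
    using U_le by (intro sum_mono) auto
  also have "\<dots> \<le> \<delta>"
    using best(1) assms(2) by (cases "K = 1") simp_all
  finally show ?thesis
    by (simp add: \<open>?W \<in> events\<close>)
qed

end
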